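(* Let $\Omega\subset\mathbb{R}^m$ be a bounded domain with smooth boundary and outward normal $\mathbf{n}$, $V\subseteq\mathbb{R}^n$, $F\colon V\to\mathbb{R}^n$ any function, $1\le p\le\infty$, and $Q$ a positive diagonal matrix. Define $\tilde F\colon\mathbf{Y}\to\mathbf{X}$ by $\tilde F(w)(\omega)=F(w(\omega))$. Then $M^+_{\mathbf{Y},\mathbf{X}}[\tilde F]\le M_{p,Q}[F]$.
   Context: $\mathbf{Y}$ is the set of $w=(w_1,\dots,w_n)\colon\bar\Omega\to V$ with $w_i\in C^2(\bar\Omega)$ and $\partial w_i/\partial\mathbf{n}=0$ on $\partial\Omega$; $\mathbf{X}=C(\bar\Omega,\mathbb{R}^n)$ with norm $\|w\|_{p,Q}=\big\|(q_1\|w_1\|_{L^p},\dots,q_n\|w_n\|_{L^p})^T\big\|_p$. $M^+_{\mathbf{Y},\mathbf{X}}[\tilde F]=\sup_{u\neq v\in\mathbf{Y}}\lim_{h\to0^+}\frac1h\left(\frac{\|u-v+h(\tilde F(u)-\tilde F(v))\|_{p,Q}}{\|u-v\|_{p,Q}}-1\right)$. On $\mathbb{R}^n$, $\|x\|_{p,Q}=\|Qx\|_p$ and $M_{p,Q}[F]=\lim_{h\to0^+}\sup_{x\neq y\in V}\frac1h\left(\frac{\|x-y+h(F(x)-F(y))\|_{p,Q}}{\|x-y\|_{p,Q}}-1\right)$. *)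

theory Defs
  imports "HOL-Analysis.Analysis" "HOL-Probability.Essential_Supremum"
begin

fun Ck_on :: "nat \<Rightarrow> 'a::euclidean_space set \<Rightarrow> ('a \<Rightarrow> real) \<Rightarrow> bool" where
  "Ck_on 0 S f = continuous_on S f"
| "Ck_on (Suc k) S f = ((\<forall>x\<in>S. f differentiable (at x)) \<and>
      (\<forall>b\<in>Basis. Ck_on k S (\<lambda>x. frechet_derivative f (at x) b)))"

definition smooth_on :: "'a::euclidean_space set \<Rightarrow> ('a \<Rightarrow> real) \<Rightarrow> bool" where
  "smooth_on S f = (\<forall>k. Ck_on k S f)"

definition grad :: "('a::euclidean_space \<Rightarrow> real) \<Rightarrow> 'a \<Rightarrow> 'a" where
  "grad f x = (\<Sum>b\<in>Basis. frechet_derivative f (at x) b *\<^sub>R b)"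

definition local_defining_function :: "'a::euclidean_space set \<Rightarrow> 'a \<Rightarrow> real \<Rightarrow> ('a \<Rightarrow> real) \<Rightarrow> bool" where
  "local_defining_function \<Omega> x r \<phi> =
     (r > 0 \<and> smooth_on (ball x r) \<phi> \<and> (\<forall>y\<in>ball x r. grad \<phi> y \<noteq> 0) \<and>
      \<Omega> \<inter> ball x r = {y\<in>ball x r. \<phi> y < 0})"

definition bounded_smooth_domain :: "'a::euclidean_space set \<Rightarrow> bool" where
  "bounded_smooth_domain \<Omega> =
     (open \<Omega> \<and> connected \<Omega> \<and> \<Omega> \<noteq> {} \<and> bounded \<Omega> \<and>
      (\<forall>x\<in>frontier \<Omega>. \<exists>r \<phi>. local_defining_function \<Omega> x r \<phi>))"

definition outward_normal :: "'a::euclidean_space set \<Rightarrow> 'a \<Rightarrow> 'a" where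
  "outward_normal \<Omega> x = (SOME \<nu>. \<exists>r \<phi>. local_defining_function \<Omega> x r \<phi> \<and>
       \<nu> = (1 / norm (grad \<phi> x)) *\<^sub>R grad \<phi> x)"

(* the space Y: w : closure Omega -> V, components C^2 up to the boundary
   (restrictions of C^2 functions on an open neighbourhood of closure Omega),
   with vanishing normal derivative on the boundary *)
definition Yspace :: "'a::euclidean_space set \<Rightarrow> (real^'n) set \<Rightarrow> ('a \<Rightarrow> real^'n) set" where
  "Yspace \<Omega> V = {w. (\<forall>x\<in>closure \<Omega>. w x \<in> V) \<and>
     (\<forall>i. \<exists>U G. open U \<and> closure \<Omega> \<subseteq> U \<and> Ck_on 2 U G \<and>
        (\<forall>x\<in>closure \<Omega>. G x = w x $ i) \<and>
        (\<forall>x\<in>frontier \<Omega>. frechet_derivative G (at x) (outward_normal \<Omega> x) = 0))}"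

definition pnorm :: "ereal \<Rightarrow> real^'n \<Rightarrow> real" where
  "pnorm p x = (if p = \<infinity> then Max (range (\<lambda>i. \<bar>x $ i\<bar>))
                else (\<Sum>i\<in>UNIV. \<bar>x $ i\<bar> powr real_of_ereal p) powr (1 / real_of_ereal p))"

definition Lp_norm :: "ereal \<Rightarrow> 'a::euclidean_space set \<Rightarrow> ('a \<Rightarrow> real) \<Rightarrow> real" where
  "Lp_norm p \<Omega> f = (if p = \<infinity> then real_of_ereal (esssup (lebesgue_on \<Omega>) (\<lambda>x. ereal \<bar>f x\<bar>))
      else enn2real (\<integral>\<^sup>+ x\<in>\<Omega>. ennreal (\<bar>f x\<bar> powr real_of_ereal p) \<partial>lebesgue)
             powr (1 / real_of_ereal p))"

definition Xnorm :: "ereal \<Rightarrow> real^'n^'n \<Rightarrow> 'a::euclidean_space set \<Rightarrow> ('a \<Rightarrow> real^'n) \<Rightarrow> real" where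
  "Xnorm p Q \<Omega> w = pnorm p (\<chi> i. Q $ i $ i * Lp_norm p \<Omega> (\<lambda>\<omega>. w \<omega> $ i))"

definition M_plus_YX :: "ereal \<Rightarrow> real^'n^'n \<Rightarrow> 'a::euclidean_space set \<Rightarrow> (real^'n) set
     \<Rightarrow> (('a \<Rightarrow> real^'n) \<Rightarrow> ('a \<Rightarrow> real^'n)) \<Rightarrow> ereal" where
  "M_plus_YX p Q \<Omega> V Ft =
    (SUP uv \<in> {(u, v). u \<in> Yspace \<Omega> V \<and> v \<in> Yspace \<Omega> V \<and> (\<exists>\<omega>\<in>closure \<Omega>. u \<omega> \<noteq> v \<omega>)}.
       ereal (Lim (at_right (0::real)) (\<lambda>h.
         (Xnorm p Q \<Omega> (\<lambda>\<omega>. fst uv \<omega> - snd uv \<omega> + h *\<^sub>R (Ft (fst uv) \<omega> - Ft (snd uv) \<omega>))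
           / Xnorm p Q \<Omega> (\<lambda>\<omega>. fst uv \<omega> - snd uv \<omega>) - 1) / h)))"

definition M_pQ :: "ereal \<Rightarrow> real^'n^'n \<Rightarrow> (real^'n) set \<Rightarrow> (real^'n \<Rightarrow> real^'n) \<Rightarrow> ereal" where
  "M_pQ p Q V F = Lim (at_right (0::real)) (\<lambda>h.
     SUP xy \<in> {(x, y). x \<in> V \<and> y \<in> V \<and> x \<noteq> y}.
       ereal ((pnorm p (Q *v (fst xy - snd xy + h *\<^sub>R (F (fst xy) - F (snd xy))))
               / pnorm p (Q *v (fst xy - snd xy)) - 1) / h))"

end

theory Submission
  imports Defs
begin

text \<open>
  For fixed \<open>a, b\<close> the map \<open>h \<mapsto> \<parallel>a + h b\<parallel>\<close> is convex, so the quotient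
  \<open>(\<parallel>a + h b\<parallel> / \<parallel>a\<parallel> - 1) / h\<close> is nondecreasing in \<open>h > 0\<close>; both one-sided limits
  in the statement are therefore infima over \<open>h > 0\<close>. Fix \<open>h\<close> and suppose the supremum over
  pairs of \<open>V\<close> at step \<open>h\<close> is a finite \<open>s\<close>. Then
  \<open>\<parallel>x - y + h (F x - F y)\<parallel>\<^sub>p\<^sub>,\<^sub>Q \<le> (1 + h s) \<parallel>x - y\<parallel>\<^sub>p\<^sub>,\<^sub>Q\<close> for all \<open>x, y \<in> V\<close>.
  Applied at every \<open>\<omega>\<close> to \<open>x = u \<omega>\<close>, \<open>y = v \<omega>\<close>, and combined with the fact that the norm on
  \<open>X\<close> is monotone under pointwise domination, this bounds the quotient of \<open>(u, v)\<close> at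
  step \<open>h\<close> by \<open>s\<close>. The same pointwise bound makes \<open>F\<close> Lipschitz on \<open>V\<close>, so
  \<open>F \<circ> u - F \<circ> v\<close> is continuous and the norm on \<open>X\<close> can be applied to it.
\<close>

section \<open>Minkowski's inequality for sums and integrals\<close>

lemma convex_on_powr_nonneg:
  fixes P :: real
  assumes "1 \<le> P"
  shows "convex_on {0..} (\<lambda>x. x powr P)"
proof
  have shrink: "(t * w) powr P \<le> t * w powr P" if "0 < t" "t \<le> 1" "0 \<le> w" for t w :: real
  proof -
    have "t powr P \<le> t powr 1"
      using that assms by (intro powr_mono') auto
    then show ?thesis
      using that by (simp add: powr_mult mult_right_mono)
  qed
  fix t x y :: real
  assume t: "0 < t" "t < 1" and xy: "x \<in> {0..}" "y \<in> {0..}"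
  show "((1 - t) *\<^sub>R x + t *\<^sub>R y) powr P \<le> (1 - t) * x powr P + t * y powr P"
  proof (cases "x = 0 \<or> y = 0")
    case True
    then show ?thesis
      using shrink[of "1 - t" x] shrink[of t y] t xy by auto
  next
    case False
    with xy have "x \<in> {0<..}" "y \<in> {0<..}" by auto
    with convex_onD[OF powr_convex[OF assms]] t show ?thesis by simp
  qed
qed simp

text \<open>Convexity of \<open>x powr P\<close> in weighted form; choosing \<open>A\<close>, \<open>B\<close> close to the two
  norms turns it into Minkowski's inequality.\<close>

lemma add_powr_le_weighted:
  fixes s t A B P :: real
  assumes P: "1 \<le> P" and st: "0 \<le> s" "0 \<le> t" and AB: "0 < A" "0 < B"
  shows "(s + t) powr P \<le> (A + B) powr (P - 1) * (s powr P / A powr (P - 1) + t powr P / B powr (P - 1))"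
proof -
  define \<nu> where "\<nu> = B / (A + B)"
  have \<nu>: "0 \<le> \<nu>" "\<nu> \<le> 1" "1 - \<nu> = A / (A + B)"
    using AB by (auto simp: \<nu>_def field_simps)
  have "(1 - \<nu>) * (s / A) + \<nu> * (t / B) = (s + t) / (A + B)"
    unfolding \<nu>(3) using AB by (simp add: \<nu>_def add_divide_distrib)
  then have "(s + t) powr P = (A + B) powr P * ((1 - \<nu>) * (s / A) + \<nu> * (t / B)) powr P"
    using AB st by (simp add: powr_mult[symmetric])
  also have "\<dots> \<le> (A + B) powr P * ((1 - \<nu>) * (s / A) powr P + \<nu> * (t / B) powr P)"
    using convex_onD[OF convex_on_powr_nonneg[OF P], of \<nu> "s / A" "t / B"] AB st \<nu>
    by (intro mult_left_mono) auto
  also have "\<dots> = (A + B) powr (P - 1) * (s powr P / A powr (P - 1) + t powr P / B powr (P - 1))"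
  proof -
    have part: "(A + B) powr P * (C / (A + B) * (w / C) powr P)
        = (A + B) powr (P - 1) * (w powr P / C powr (P - 1))" if "0 < C" "0 \<le> w" for C w
    proof -
      have split: "D powr P = D * D powr (P - 1)" if "0 < D" for D :: real
        using that by (simp add: powr_diff)
      show ?thesis
        using that AB by (simp add: powr_divide split[of C] split[of "A + B"])
    qed
    show ?thesis
      unfolding distrib_left \<nu>(3) using part[of A s] part[of B t] AB st by (simp add: \<nu>_def)
  qed
  finally show ?thesis .
qed

lemma root_add_le_of_weighted_bound:
  fixes X Y Z P :: real
  assumes P: "1 \<le> P" and XYZ: "0 \<le> X" "0 \<le> Y" "0 \<le> Z"
    and bound: "\<And>A B. 0 < A \<Longrightarrow> 0 < B \<Longrightarrow>
       Z \<le> (A + B) powr (P - 1) * (X / A powr (P - 1) + Y / B powr (P - 1))"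
  shows "Z powr (1 / P) \<le> X powr (1 / P) + Y powr (1 / P)"
proof (rule field_le_epsilon)
  fix e :: real
  assume e: "0 < e"
  define A where "A = X powr (1 / P) + e / 2"
  define B where "B = Y powr (1 / P) + e / 2"
  have AB: "0 < A" "0 < B"
    using e by (auto simp: A_def B_def intro: add_nonneg_pos)
  have weight: "W / C powr (P - 1) \<le> C" if "0 < C" "W powr (1 / P) \<le> C" "0 \<le> W" for W C
  proof -
    have "W = (W powr (1 / P)) powr P"
      using that P by (simp add: powr_powr)
    also have "\<dots> \<le> C powr P"
      using that P by (intro powr_mono2) auto
    also have "\<dots> = C * C powr (P - 1)"
      using that by (simp add: powr_diff)
    finally show ?thesis
      using that by (simp add: divide_le_eq)
  qed
  have "X / A powr (P - 1) \<le> A" "Y / B powr (P - 1) \<le> B"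
    using weight[of A X] weight[of B Y] AB XYZ e by (auto simp: A_def B_def)
  then have "(A + B) powr (P - 1) * (X / A powr (P - 1) + Y / B powr (P - 1))
      \<le> (A + B) powr (P - 1) * (A + B)"
    by (intro mult_left_mono add_mono) auto
  also have "\<dots> = (A + B) powr P"
    using AB by (simp add: powr_diff)
  finally have "Z \<le> (A + B) powr P"
    using bound[OF AB] by (rule order_trans[rotated])
  then have "Z powr (1 / P) \<le> ((A + B) powr P) powr (1 / P)"
    using XYZ P by (intro powr_mono2) auto
  also have "\<dots> = A + B"
    using AB P by (simp add: powr_powr)
  finally show "Z powr (1 / P) \<le> X powr (1 / P) + Y powr (1 / P) + e"
    by (simp add: A_def B_def)
qed

lemma sum_powr_root_triangle:
  fixes f g h :: "'a \<Rightarrow> real"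
  assumes P: "1 \<le> P" and nonneg: "\<And>i. 0 \<le> f i" "\<And>i. 0 \<le> g i" "\<And>i. 0 \<le> h i"
    and le: "\<And>i. h i \<le> f i + g i"
  shows "(\<Sum>i\<in>S. h i powr P) powr (1 / P)
    \<le> (\<Sum>i\<in>S. f i powr P) powr (1 / P) + (\<Sum>i\<in>S. g i powr P) powr (1 / P)"
proof (rule root_add_le_of_weighted_bound[OF P])
  fix A B :: real
  assume AB: "0 < A" "0 < B"
  have "(\<Sum>i\<in>S. h i powr P)
      \<le> (\<Sum>i\<in>S. (A + B) powr (P - 1) * (f i powr P / A powr (P - 1) + g i powr P / B powr (P - 1)))"
  proof (rule sum_mono)
    fix i
    have "h i powr P \<le> (f i + g i) powr P"
      using P nonneg le by (intro powr_mono2) auto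
    also have "\<dots> \<le> (A + B) powr (P - 1) * (f i powr P / A powr (P - 1) + g i powr P / B powr (P - 1))"
      using add_powr_le_weighted[OF P nonneg(1,2) AB] .
    finally show "h i powr P \<le> \<dots>" .
  qed
  then show "(\<Sum>i\<in>S. h i powr P)
      \<le> (A + B) powr (P - 1) * ((\<Sum>i\<in>S. f i powr P) / A powr (P - 1) + (\<Sum>i\<in>S. g i powr P) / B powr (P - 1))"
    by (simp add: sum_distrib_left[symmetric] sum.distrib sum_divide_distrib)
qed (auto intro: sum_nonneg)

lemma integral_powr_root_triangle:
  fixes f g h :: "'a \<Rightarrow> real"
  assumes P: "1 \<le> P"
    and int: "integrable M (\<lambda>x. f x powr P)" "integrable M (\<lambda>x. g x powr P)"
      "integrable M (\<lambda>x. h x powr P)"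
    and nonneg: "\<And>x. 0 \<le> f x" "\<And>x. 0 \<le> g x" "\<And>x. 0 \<le> h x"
    and le: "\<And>x. h x \<le> f x + g x"
  shows "(\<integral>x. h x powr P \<partial>M) powr (1 / P)
    \<le> (\<integral>x. f x powr P \<partial>M) powr (1 / P) + (\<integral>x. g x powr P \<partial>M) powr (1 / P)"
proof (rule root_add_le_of_weighted_bound[OF P])
  fix A B :: real
  assume AB: "0 < A" "0 < B"
  have "(\<integral>x. h x powr P \<partial>M)
      \<le> (\<integral>x. (A + B) powr (P - 1) * (f x powr P / A powr (P - 1) + g x powr P / B powr (P - 1)) \<partial>M)"
  proof (rule integral_mono)
    fix x
    have "h x powr P \<le> (f x + g x) powr P"
      using P nonneg le by (intro powr_mono2) auto
    also have "\<dots> \<le> (A + B) powr (P - 1) * (f x powr P / A powr (P - 1) + g x powr P / B powr (P - 1))"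
      using add_powr_le_weighted[OF P nonneg(1,2) AB] .
    finally show "h x powr P \<le> \<dots>" .
  qed (use int in auto)
  then show "(\<integral>x. h x powr P \<partial>M)
      \<le> (A + B) powr (P - 1) * ((\<integral>x. f x powr P \<partial>M) / A powr (P - 1) + (\<integral>x. g x powr P \<partial>M) / B powr (P - 1))"
    using int by simp
qed (auto intro: integral_nonneg_AE)

section \<open>The \<open>p\<close>-norms on \<open>real^'n\<close>\<close>

lemma pnorm_ereal: "pnorm (ereal P) x = (\<Sum>i\<in>UNIV. \<bar>x $ i\<bar> powr P) powr (1 / P)"
  by (simp add: pnorm_def)

lemma pnorm_ereal_powr:
  assumes "0 < P"
  shows "pnorm (ereal P) x powr P = (\<Sum>i\<in>UNIV. \<bar>x $ i\<bar> powr P)"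
  using assms by (simp add: pnorm_ereal powr_powr sum_nonneg)

lemma pnorm_nonneg: "0 \<le> pnorm p x"
  unfolding pnorm_def by (auto simp: Max_ge_iff)

lemma ereal_ge_1_cases:
  assumes "1 \<le> p"
  obtains "p = \<infinity>" | P where "p = ereal P" "1 \<le> P"
  using assms by (cases p) auto

lemma abs_component_le_pnorm:
  assumes "1 \<le> p"
  shows "\<bar>x $ i\<bar> \<le> pnorm p x"
  using assms
proof (cases rule: ereal_ge_1_cases)
  case (2 P)
  have "(\<bar>x $ i\<bar> powr P) powr (1 / P) \<le> (\<Sum>j\<in>UNIV. \<bar>x $ j\<bar> powr P) powr (1 / P)"
    using 2 by (intro powr_mono2 member_le_sum) auto
  then show ?thesis
    using 2 by (simp add: pnorm_ereal powr_powr)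
qed (simp add: pnorm_def)

lemma pnorm_infinity_le:
  assumes "\<And>i. \<bar>x $ i\<bar> \<le> r"
  shows "pnorm \<infinity> x \<le> r"
  using assms by (simp add: pnorm_def Max_le_iff)

lemma pnorm_scaleR:
  assumes "1 \<le> p"
  shows "pnorm p (c *\<^sub>R x) = \<bar>c\<bar> * pnorm p x"
  using assms
proof (cases rule: ereal_ge_1_cases)
  case 1
  have "range (\<lambda>i. \<bar>c\<bar> * \<bar>x $ i\<bar>) = (\<lambda>t. \<bar>c\<bar> * t) ` range (\<lambda>i. \<bar>x $ i\<bar>)"
    by auto
  moreover have "mono (\<lambda>t. \<bar>c\<bar> * t)"
    by (rule monoI) (simp add: mult_left_mono)
  ultimately show ?thesis
    using 1 by (simp add: pnorm_def abs_mult mono_Max_commute)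
next
  case (2 P)
  have "(\<Sum>i\<in>UNIV. \<bar>c * x $ i\<bar> powr P) = \<bar>c\<bar> powr P * (\<Sum>i\<in>UNIV. \<bar>x $ i\<bar> powr P)"
    by (simp add: abs_mult powr_mult sum_distrib_left)
  then show ?thesis
    using 2 by (simp add: pnorm_ereal powr_mult sum_nonneg powr_powr)
qed

lemma pnorm_triangle:
  assumes "1 \<le> p"
  shows "pnorm p (x + y) \<le> pnorm p x + pnorm p y"
  using assms
proof (cases rule: ereal_ge_1_cases)
  case 1
  have "\<bar>(x + y) $ i\<bar> \<le> pnorm p x + pnorm p y" for i
    using abs_triangle_ineq[of "x $ i" "y $ i"] abs_component_le_pnorm[OF assms, of x i]
      abs_component_le_pnorm[OF assms, of y i]
    by simp
  then show ?thesis
    unfolding 1 by (rule pnorm_infinity_le)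
next
  case (2 P)
  then show ?thesis
    unfolding 2(1) pnorm_ereal by (intro sum_powr_root_triangle) (auto simp: abs_triangle_ineq)
qed

lemma pnorm_le_card_norm:
  fixes x :: "real^'n"
  assumes "1 \<le> p"
  shows "pnorm p x \<le> real CARD('n) * norm x"
  using assms
proof (cases rule: ereal_ge_1_cases)
  case 1
  have "pnorm p x \<le> norm x"
    unfolding 1 by (intro pnorm_infinity_le component_le_norm_cart)
  also have "\<dots> \<le> real CARD('n) * norm x"
    by (simp add: mult_le_cancel_right1)
  finally show ?thesis .
next
  case (2 P)
  have "(\<Sum>i\<in>UNIV. \<bar>x $ i\<bar> powr P) \<le> real CARD('n) * norm x powr P"
    using sum_mono[of UNIV "\<lambda>i. \<bar>x $ i\<bar> powr P" "\<lambda>_. norm x powr P"] 2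
    by (simp add: powr_mono2 component_le_norm_cart)
  then have "pnorm p x \<le> (real CARD('n) * norm x powr P) powr (1 / P)"
    using 2 by (simp add: pnorm_ereal powr_mono2 sum_nonneg)
  also have "\<dots> = real CARD('n) powr (1 / P) * norm x"
    using 2 by (simp add: powr_mult powr_powr)
  also have "\<dots> \<le> real CARD('n) * norm x"
    using 2 powr_mono[of "1 / P" 1 "real CARD('n)"] by (simp add: mult_right_mono)
  finally show ?thesis .
qed

lemma pnorm_reverse_triangle:
  assumes "1 \<le> p"
  shows "\<bar>pnorm p x - pnorm p y\<bar> \<le> pnorm p (x - y)"
  using pnorm_triangle[OF assms, of y "x - y"] pnorm_triangle[OF assms, of x "y - x"]
    pnorm_scaleR[OF assms, of "-1" "x - y"]
  by simp

lemma continuous_on_pnorm_matrix: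
  fixes Q :: "real^'n^'m"
  assumes "1 \<le> p"
  shows "continuous_on S (\<lambda>z. pnorm p (Q *v z))"
proof -
  have "(real CARD('m))-lipschitz_on UNIV (pnorm p :: real^'m \<Rightarrow> real)"
    using order_trans[OF pnorm_reverse_triangle[OF assms] pnorm_le_card_norm[OF assms]]
    by (auto simp: lipschitz_on_def dist_norm)
  then have "continuous_on UNIV (pnorm p :: real^'m \<Rightarrow> real)"
    by (rule lipschitz_on_continuous_on)
  then show ?thesis
    by (rule continuous_on_compose2)
      (auto intro: linear_continuous_on matrix_vector_mul_bounded_linear)
qed

lemma pnorm_matrix_le_norm:
  fixes Q :: "real^'n^'m"
  assumes "1 \<le> p"
  shows "\<exists>C. \<forall>z. pnorm p (Q *v z) \<le> C * norm z"
proof -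
  obtain B where B: "\<And>z. norm (Q *v z) \<le> norm z * B"
    using bounded_linear.bounded[OF matrix_vector_mul_bounded_linear[of Q]] by blast
  have "pnorm p (Q *v z) \<le> (real CARD('m) * B) * norm z" for z
    using order_trans[OF pnorm_le_card_norm[OF assms] mult_left_mono[OF B]]
    by (simp add: algebra_simps)
  then show ?thesis
    by blast
qed

lemma diag_matrix_vector_mult_nth:
  assumes "\<forall>i j. i \<noteq> j \<longrightarrow> Q $ i $ j = 0"
  shows "(Q *v z) $ i = Q $ i $ i * z $ i"
proof -
  have "(\<Sum>j\<in>UNIV. Q $ i $ j * z $ j) = (\<Sum>j\<in>UNIV. if j = i then Q $ i $ i * z $ i else 0)"
    using assms by (intro sum.cong) auto
  then show ?thesis
    by (simp add: matrix_vector_mult_def)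
qed

section \<open>Comparison of the one-sided slopes\<close>

definition rel_diff_quot :: "(real \<Rightarrow> real) \<Rightarrow> real \<Rightarrow> real" where
  "rel_diff_quot \<phi> h = (\<phi> h / \<phi> 0 - 1) / h"

lemma rel_diff_quot_eq: "rel_diff_quot \<phi> h = (\<phi> h - \<phi> 0) / h / \<phi> 0" if "\<phi> 0 \<noteq> 0"
  using that by (simp add: rel_diff_quot_def diff_divide_distrib)

lemma slope_from_zero:
  fixes \<phi> :: "real \<Rightarrow> real"
  shows "(\<phi> 0 - \<phi> h) / (0 - h) = (\<phi> h - \<phi> 0) / h"
  by (simp add: minus_divide_left)

lemma rel_diff_quot_mono:
  assumes "convex_on UNIV \<phi>" "0 < \<phi> 0" "0 < a" "a \<le> b"
  shows "rel_diff_quot \<phi> a \<le> rel_diff_quot \<phi> b"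
proof (cases "a = b")
  case False
  then have "(\<phi> 0 - \<phi> a) / (0 - a) \<le> (\<phi> 0 - \<phi> b) / (0 - b)"
    using assms by (intro convex_on_slope_le(1)) auto
  then have "(\<phi> a - \<phi> 0) / a / \<phi> 0 \<le> (\<phi> b - \<phi> 0) / b / \<phi> 0"
    unfolding slope_from_zero by (rule divide_right_mono[OF _ less_imp_le[OF assms(2)]])
  then show ?thesis
    using assms(2) rel_diff_quot_eq[of \<phi> a] rel_diff_quot_eq[of \<phi> b] by simp
qed simp

lemma rel_diff_quot_lower_bound:
  assumes "convex_on UNIV \<phi>" "0 < \<phi> 0" "0 < h"
  shows "(\<phi> 0 - \<phi> (-1)) / \<phi> 0 \<le> rel_diff_quot \<phi> h"
proof -
  have "(\<phi> (-1) - \<phi> 0) / (-1 - 0) \<le> (\<phi> (-1) - \<phi> h) / (-1 - h)"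
    "(\<phi> (-1) - \<phi> h) / (-1 - h) \<le> (\<phi> 0 - \<phi> h) / (0 - h)"
    using convex_on_slope_le[OF assms(1), of "-1" h 0] assms(3) by simp_all
  then have "\<phi> 0 - \<phi> (-1) \<le> (\<phi> h - \<phi> 0) / h"
    unfolding slope_from_zero by simp
  then have "(\<phi> 0 - \<phi> (-1)) / \<phi> 0 \<le> (\<phi> h - \<phi> 0) / h / \<phi> 0"
    by (rule divide_right_mono[OF _ less_imp_le[OF assms(2)]])
  then show ?thesis
    using assms(2) rel_diff_quot_eq[of \<phi> h] by simp
qed

lemma rel_diff_quot_tendsto_Inf:
  assumes "convex_on UNIV \<phi>" "0 < \<phi> 0"
  shows "(rel_diff_quot \<phi> \<longlongrightarrow> Inf (rel_diff_quot \<phi> ` {0<..})) (at_right 0)"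
  using Lim_right_bound[of UNIV 0 "rel_diff_quot \<phi>" "(\<phi> 0 - \<phi> (-1)) / \<phi> 0"]
    rel_diff_quot_mono[OF assms] rel_diff_quot_lower_bound[OF assms]
  by simp

lemma Inf_rel_diff_quot_le:
  assumes "convex_on UNIV \<phi>" "0 < \<phi> 0" "0 < h"
  shows "Inf (rel_diff_quot \<phi> ` {0<..}) \<le> rel_diff_quot \<phi> h"
  using rel_diff_quot_lower_bound[OF assms(1,2)] assms(3)
  by (intro cInf_lower bdd_belowI2) auto

text \<open>The supremum under the limit in \<open>M_pQ\<close>, for an arbitrary norm \<open>\<nu>\<close>.\<close>

definition sup_slope :: "('v::real_vector \<Rightarrow> real) \<Rightarrow> 'v set \<Rightarrow> ('v \<Rightarrow> 'v) \<Rightarrow> real \<Rightarrow> ereal" where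
  "sup_slope \<nu> V F h = (SUP xy \<in> {(x, y). x \<in> V \<and> y \<in> V \<and> x \<noteq> y}.
     ereal (rel_diff_quot (\<lambda>h. \<nu> (fst xy - snd xy + h *\<^sub>R (F (fst xy) - F (snd xy)))) h))"

text \<open>\<open>\<nu>\<close> stands for \<open>\<parallel>\<cdot>\<parallel>\<^sub>p\<^sub>,\<^sub>Q\<close> on \<open>real^'n\<close> and \<open>N\<close> for the norm of \<open>X\<close> on
  functions continuous on \<open>K = closure \<Omega>\<close>; these properties are all the argument uses.\<close>

locale lifted_norm =
  fixes \<nu> :: "'v::real_normed_vector \<Rightarrow> real"
    and N :: "('m::topological_space \<Rightarrow> 'v) \<Rightarrow> real"
    and K :: "'m set"
  assumes nu_triangle: "\<nu> (x + y) \<le> \<nu> x + \<nu> y"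
    and nu_scaleR: "\<nu> (r *\<^sub>R x) = \<bar>r\<bar> * \<nu> x"
    and nu_pos: "x \<noteq> 0 \<Longrightarrow> 0 < \<nu> x"
    and nu_le_norm: "\<exists>C. \<forall>x. \<nu> x \<le> C * norm x"
    and norm_le_nu: "\<exists>C. \<forall>x. norm x \<le> C * \<nu> x"
    and N_triangle: "continuous_on K c \<Longrightarrow> continuous_on K d \<Longrightarrow> N (\<lambda>\<omega>. c \<omega> + d \<omega>) \<le> N c + N d"
    and N_dominated: "continuous_on K c \<Longrightarrow> continuous_on K a \<Longrightarrow> 0 \<le> k \<Longrightarrow>
      (\<And>\<omega>. \<omega> \<in> K \<Longrightarrow> \<nu> (c \<omega>) \<le> k * \<nu> (a \<omega>)) \<Longrightarrow> N c \<le> k * N a"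
    and N_pos: "continuous_on K a \<Longrightarrow> \<omega> \<in> K \<Longrightarrow> a \<omega> \<noteq> 0 \<Longrightarrow> 0 < N a"
begin

lemma nu_zero [simp]: "\<nu> 0 = 0"
  using nu_scaleR[of 0 0] by simp

lemma nu_nonneg: "0 \<le> \<nu> x"
  by (cases "x = 0") (auto dest: nu_pos)

lemma nu_minus_commute: "\<nu> (x - y) = \<nu> (y - x)"
  using nu_scaleR[of "-1" "x - y"] by simp

lemma convex_on_nu_line: "convex_on UNIV (\<lambda>h. \<nu> (z + h *\<^sub>R w))"
proof (rule convex_onI)
  fix t h1 h2 :: real
  assume t: "0 < t" "t < 1"
  have "z + ((1 - t) *\<^sub>R h1 + t *\<^sub>R h2) *\<^sub>R w = (1 - t) *\<^sub>R (z + h1 *\<^sub>R w) + t *\<^sub>R (z + h2 *\<^sub>R w)"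
    by (simp add: algebra_simps)
  then show "\<nu> (z + ((1 - t) *\<^sub>R h1 + t *\<^sub>R h2) *\<^sub>R w) \<le> (1 - t) * \<nu> (z + h1 *\<^sub>R w) + t * \<nu> (z + h2 *\<^sub>R w)"
    using nu_triangle[of "(1 - t) *\<^sub>R (z + h1 *\<^sub>R w)" "t *\<^sub>R (z + h2 *\<^sub>R w)"] t
    by (simp add: nu_scaleR)
qed simp

lemma N_scaleR_le:
  assumes "continuous_on K c" "0 \<le> t"
  shows "N (\<lambda>\<omega>. t *\<^sub>R c \<omega>) \<le> t * N c"
  using assms by (intro N_dominated continuous_on_scaleR continuous_on_const) (simp_all add: nu_scaleR)

lemma convex_on_N_line:
  assumes a: "continuous_on K a" and b: "continuous_on K b"
  shows "convex_on UNIV (\<lambda>h. N (\<lambda>\<omega>. a \<omega> + h *\<^sub>R b \<omega>))"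
proof (rule convex_onI)
  fix t h1 h2 :: real
  assume t: "0 < t" "t < 1"
  have line: "continuous_on K (\<lambda>\<omega>. a \<omega> + h *\<^sub>R b \<omega>)" for h
    by (intro continuous_intros a b)
  have "N (\<lambda>\<omega>. a \<omega> + ((1 - t) *\<^sub>R h1 + t *\<^sub>R h2) *\<^sub>R b \<omega>)
      = N (\<lambda>\<omega>. (1 - t) *\<^sub>R (a \<omega> + h1 *\<^sub>R b \<omega>) + t *\<^sub>R (a \<omega> + h2 *\<^sub>R b \<omega>))"
    by (intro arg_cong[where f = N] ext) (simp add: algebra_simps)
  also have "\<dots> \<le> N (\<lambda>\<omega>. (1 - t) *\<^sub>R (a \<omega> + h1 *\<^sub>R b \<omega>)) + N (\<lambda>\<omega>. t *\<^sub>R (a \<omega> + h2 *\<^sub>R b \<omega>))"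
    by (intro N_triangle continuous_intros a b)
  also have "\<dots> \<le> (1 - t) * N (\<lambda>\<omega>. a \<omega> + h1 *\<^sub>R b \<omega>) + t * N (\<lambda>\<omega>. a \<omega> + h2 *\<^sub>R b \<omega>)"
    using t by (intro add_mono N_scaleR_le line) auto
  finally show "N (\<lambda>\<omega>. a \<omega> + ((1 - t) *\<^sub>R h1 + t *\<^sub>R h2) *\<^sub>R b \<omega>)
      \<le> (1 - t) * N (\<lambda>\<omega>. a \<omega> + h1 *\<^sub>R b \<omega>) + t * N (\<lambda>\<omega>. a \<omega> + h2 *\<^sub>R b \<omega>)" .
qed simp

lemma sup_slope_mono:
  assumes "0 < a" "a \<le> b"
  shows "sup_slope \<nu> V F a \<le> sup_slope \<nu> V F b"
  unfolding sup_slope_def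
proof (intro SUP_mono bexI)
  fix xy :: "'v \<times> 'v"
  assume "xy \<in> {(x, y). x \<in> V \<and> y \<in> V \<and> x \<noteq> y}"
  then show "ereal (rel_diff_quot (\<lambda>h. \<nu> (fst xy - snd xy + h *\<^sub>R (F (fst xy) - F (snd xy)))) a)
      \<le> ereal (rel_diff_quot (\<lambda>h. \<nu> (fst xy - snd xy + h *\<^sub>R (F (fst xy) - F (snd xy)))) b)"
    using assms by (auto intro!: rel_diff_quot_mono convex_on_nu_line nu_pos)
qed

lemma Lim_sup_slope: "Lim (at_right 0) (sup_slope \<nu> V F) = (INF h\<in>{0<..}. sup_slope \<nu> V F h)"
  using Lim_right_bound[of UNIV 0 "sup_slope \<nu> V F" bot] sup_slope_mono
  by (intro tendsto_Lim) auto

lemma step_le_of_sup_slope_le: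
  assumes h: "0 < h" and s: "sup_slope \<nu> V F h \<le> ereal s" and xy: "x \<in> V" "y \<in> V"
  shows "\<nu> (x - y + h *\<^sub>R (F x - F y)) \<le> (1 + h * s) * \<nu> (x - y)"
proof (cases "x = y")
  case False
  have "ereal (rel_diff_quot (\<lambda>h. \<nu> (x - y + h *\<^sub>R (F x - F y))) h) \<le> sup_slope \<nu> V F h"
    unfolding sup_slope_def using xy False by (force intro: SUP_upper2)
  then have "ereal (rel_diff_quot (\<lambda>h. \<nu> (x - y + h *\<^sub>R (F x - F y))) h) \<le> ereal s"
    using s by (rule order_trans)
  then have "(\<nu> (x - y + h *\<^sub>R (F x - F y)) / \<nu> (x - y) - 1) / h \<le> s"
    by (simp add: rel_diff_quot_def)
  with h nu_pos[of "x - y"] False show ?thesis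
    by (simp add: pos_divide_le_eq algebra_simps)
qed simp

lemma nu_diff_le_of_sup_slope_le:
  assumes h: "0 < h" and s: "sup_slope \<nu> V F h \<le> ereal s" and xy: "x \<in> V" "y \<in> V"
  shows "h * \<nu> (F x - F y) \<le> (2 + h * s) * \<nu> (x - y)"
proof -
  have "h * \<nu> (F x - F y) = \<nu> ((x - y + h *\<^sub>R (F x - F y)) - (x - y))"
    using h by (simp add: nu_scaleR)
  also have "\<dots> \<le> \<nu> (x - y + h *\<^sub>R (F x - F y)) + \<nu> (x - y)"
    using nu_triangle[of "x - y + h *\<^sub>R (F x - F y)" "y - x"] by (simp add: nu_minus_commute)
  also have "\<dots> \<le> (2 + h * s) * \<nu> (x - y)"
    using step_le_of_sup_slope_le[OF h s xy] by (simp add: algebra_simps)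
  finally show ?thesis .
qed

lemma continuous_on_of_sup_slope_finite:
  assumes h: "0 < h" and fin: "sup_slope \<nu> V F h < \<infinity>"
  shows "continuous_on V F"
proof -
  obtain s where s: "sup_slope \<nu> V F h \<le> ereal s"
    using fin by (cases "sup_slope \<nu> V F h") auto
  define L where "L = \<bar>2 + h * s\<bar> / h"
  have nu_lipschitz: "\<nu> (F x - F y) \<le> L * \<nu> (x - y)" if "x \<in> V" "y \<in> V" for x y
  proof -
    have "h * \<nu> (F x - F y) \<le> \<bar>2 + h * s\<bar> * \<nu> (x - y)"
      using nu_diff_le_of_sup_slope_le[OF h s that] mult_right_mono[OF abs_ge_self nu_nonneg]
      by (rule order_trans)
    then show ?thesis
      using h by (simp add: L_def field_simps)
  qed
  obtain Cu where Cu: "\<And>x. \<nu> x \<le> Cu * norm x"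
    using nu_le_norm by blast
  obtain Cl where Cl: "\<And>x. norm x \<le> Cl * \<nu> x"
    using norm_le_nu by blast
  have L: "0 \<le> L"
    using h by (simp add: L_def)
  have "(\<bar>Cl\<bar> * L * \<bar>Cu\<bar>)-lipschitz_on V F"
  proof (rule lipschitz_onI)
    fix x y
    assume xy: "x \<in> V" "y \<in> V"
    have "dist (F x) (F y) \<le> \<bar>Cl\<bar> * \<nu> (F x - F y)"
      using Cl[of "F x - F y"] nu_nonneg[of "F x - F y"]
      by (simp add: dist_norm) (meson abs_ge_self mult_right_mono order_trans)
    also have "\<dots> \<le> \<bar>Cl\<bar> * (L * \<nu> (x - y))"
      by (intro mult_left_mono nu_lipschitz xy) simp
    also have "\<dots> \<le> \<bar>Cl\<bar> * (L * (\<bar>Cu\<bar> * norm (x - y)))"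
      using Cu[of "x - y"] abs_ge_self[of Cu] L
      by (intro mult_left_mono) (auto intro: order_trans[OF _ mult_right_mono])
    finally show "dist (F x) (F y) \<le> \<bar>Cl\<bar> * L * \<bar>Cu\<bar> * dist x y"
      by (simp add: dist_norm mult.assoc)
  qed (use L in simp)
  then show ?thesis
    by (rule lipschitz_on_continuous_on)
qed

lemma rel_diff_quot_lifted_le:
  assumes u: "continuous_on K u" "u ` K \<subseteq> V" and v: "continuous_on K v" "v ` K \<subseteq> V"
    and F: "continuous_on V F" and \<omega>0: "\<omega>0 \<in> K" "u \<omega>0 \<noteq> v \<omega>0"
    and h: "0 < h" and s: "sup_slope \<nu> V F h \<le> ereal s"
  shows "rel_diff_quot (\<lambda>h. N (\<lambda>\<omega>. u \<omega> - v \<omega> + h *\<^sub>R (F (u \<omega>) - F (v \<omega>)))) h \<le> s"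
proof -
  define a where "a \<omega> = u \<omega> - v \<omega>" for \<omega>
  define b where "b \<omega> = F (u \<omega>) - F (v \<omega>)" for \<omega>
  have a: "continuous_on K a"
    unfolding a_def by (intro continuous_intros u v)
  have b: "continuous_on K b"
    unfolding b_def using u v by (intro continuous_intros continuous_on_compose2[OF F]) auto
  have step: "\<nu> (a \<omega> + h *\<^sub>R b \<omega>) \<le> (1 + h * s) * \<nu> (a \<omega>)" if "\<omega> \<in> K" for \<omega>
    using step_le_of_sup_slope_le[OF h s] u(2) v(2) that by (auto simp: a_def b_def image_subset_iff)
  have "a \<omega>0 \<noteq> 0"
    using \<omega>0(2) by (simp add: a_def)
  moreover have "0 \<le> (1 + h * s) * \<nu> (a \<omega>0)"
    using order_trans[OF nu_nonneg step[OF \<omega>0(1)]] .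
  ultimately have "0 \<le> 1 + h * s"
    using nu_pos[of "a \<omega>0"] by (simp add: zero_le_mult_iff)
  then have "N (\<lambda>\<omega>. a \<omega> + h *\<^sub>R b \<omega>) \<le> (1 + h * s) * N a"
    using step by (intro N_dominated continuous_intros a b) auto
  moreover have "0 < N a"
    using N_pos[OF a \<omega>0(1) \<open>a \<omega>0 \<noteq> 0\<close>] .
  ultimately have "N (\<lambda>\<omega>. a \<omega> + h *\<^sub>R b \<omega>) / N a - 1 \<le> h * s"
    by (simp add: field_simps)
  with h show ?thesis
    by (simp add: rel_diff_quot_def a_def[abs_def] b_def pos_divide_le_eq mult.commute)
qed

lemma Lim_lifted_slope_le:
  assumes u: "continuous_on K u" "u ` K \<subseteq> V" and v: "continuous_on K v" "v ` K \<subseteq> V"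
    and \<omega>0: "\<omega>0 \<in> K" "u \<omega>0 \<noteq> v \<omega>0"
  shows "ereal (Lim (at_right 0) (rel_diff_quot (\<lambda>h. N (\<lambda>\<omega>. u \<omega> - v \<omega> + h *\<^sub>R (F (u \<omega>) - F (v \<omega>))))))
    \<le> (INF h\<in>{0<..}. sup_slope \<nu> V F h)"
proof (cases "(INF h\<in>{0<..}. sup_slope \<nu> V F h) = \<infinity>")
  case False
  then have "(INF h\<in>{0<..}. sup_slope \<nu> V F h) < \<infinity>"
    by (simp add: less_top)
  then obtain h0 where "0 < h0" "sup_slope \<nu> V F h0 < \<infinity>"
    by (metis INF_less_iff greaterThan_iff)
  then have F: "continuous_on V F"
    by (rule continuous_on_of_sup_slope_finite)
  define \<phi> where "\<phi> = (\<lambda>h. N (\<lambda>\<omega>. u \<omega> - v \<omega> + h *\<^sub>R (F (u \<omega>) - F (v \<omega>))))"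
  have "continuous_on K (\<lambda>\<omega>. u \<omega> - v \<omega>)" "continuous_on K (\<lambda>\<omega>. F (u \<omega>) - F (v \<omega>))"
    using u v by (auto intro!: continuous_intros continuous_on_compose2[OF F])
  from convex_on_N_line[OF this] have \<phi>: "convex_on UNIV \<phi>" "0 < \<phi> 0"
    using N_pos[OF \<open>continuous_on K (\<lambda>\<omega>. u \<omega> - v \<omega>)\<close> \<omega>0(1)] \<omega>0(2) by (simp_all add: \<phi>_def)
  have "ereal (Inf (rel_diff_quot \<phi> ` {0<..})) \<le> sup_slope \<nu> V F h" if h: "0 < h" for h
  proof (rule ereal_le_real)
    fix s
    assume "sup_slope \<nu> V F h \<le> ereal s"
    then have "rel_diff_quot \<phi> h \<le> s"
      unfolding \<phi>_def using rel_diff_quot_lifted_le[OF u v F \<omega>0 h] by blast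
    then show "ereal (Inf (rel_diff_quot \<phi> ` {0<..})) \<le> ereal s"
      using Inf_rel_diff_quot_le[OF \<phi> h] by simp
  qed
  then have "ereal (Inf (rel_diff_quot \<phi> ` {0<..})) \<le> (INF h\<in>{0<..}. sup_slope \<nu> V F h)"
    by (intro INF_greatest) auto
  moreover have "Lim (at_right 0) (rel_diff_quot \<phi>) = Inf (rel_diff_quot \<phi> ` {0<..})"
    by (intro tendsto_Lim rel_diff_quot_tendsto_Inf \<phi>) simp
  ultimately show ?thesis
    by (simp add: \<phi>_def)
qed simp

theorem SUP_Lim_lifted_slope_le:
  assumes Y: "\<And>u. u \<in> Y \<Longrightarrow> continuous_on K u \<and> u ` K \<subseteq> V"
  shows "(SUP uv \<in> {(u, v). u \<in> Y \<and> v \<in> Y \<and> (\<exists>\<omega>\<in>K. u \<omega> \<noteq> v \<omega>)}.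
      ereal (Lim (at_right 0) (rel_diff_quot
        (\<lambda>h. N (\<lambda>\<omega>. fst uv \<omega> - snd uv \<omega> + h *\<^sub>R (F (fst uv \<omega>) - F (snd uv \<omega>)))))))
    \<le> Lim (at_right 0) (sup_slope \<nu> V F)"
  unfolding Lim_sup_slope
proof (rule SUP_least, clarify)
  fix u v \<omega>
  assume "u \<in> Y" "v \<in> Y" "\<omega> \<in> K" "u \<omega> \<noteq> v \<omega>"
  then show "ereal (Lim (at_right 0) (rel_diff_quot
      (\<lambda>h. N (\<lambda>\<omega>. fst (u, v) \<omega> - snd (u, v) \<omega> + h *\<^sub>R (F (fst (u, v) \<omega>) - F (snd (u, v) \<omega>))))))
    \<le> (INF h\<in>{0<..}. sup_slope \<nu> V F h)"
    using Y[of u] Y[of v] by (simp add: Lim_lifted_slope_le)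
qed

end

section \<open>Lebesgue norms of continuous functions on a bounded open set\<close>

lemma sets_lebesgue_open: "open S \<Longrightarrow> S \<in> sets lebesgue"
  by (simp add: borel_open sets_completionI_sets)

lemma emeasure_lebesgue_open_pos:
  fixes S :: "'a::euclidean_space set"
  assumes "open S" "x \<in> S"
  shows "0 < emeasure lebesgue S"
proof -
  obtain e where "0 < e" "ball x e \<subseteq> S"
    using assms openE by blast
  then obtain a b where box: "x \<in> box a b" "box a b \<subseteq> S"
    by (metis rational_boxes order_trans)
  then have "0 < emeasure lebesgue (box a b)"
    by (auto simp: emeasure_lborel_box_eq mem_box algebra_simps intro!: prod_pos)
  also have "\<dots> \<le> emeasure lebesgue S"
    using assms box by (auto intro!: emeasure_mono sets_lebesgue_open)
  finally show ?thesis .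
qed

lemma measurable_continuous_on_closure:
  assumes "open \<Omega>" "continuous_on (closure \<Omega>) f"
  shows "f \<in> borel_measurable (lebesgue_on \<Omega>)"
  using continuous_on_subset[OF assms(2) closure_subset] assms(1)
  by (intro continuous_imp_measurable_on_sets_lebesgue sets_lebesgue_open)

lemma integrable_continuous_on_closure:
  fixes f :: "'a::euclidean_space \<Rightarrow> real"
  assumes "open \<Omega>" "bounded \<Omega>" "continuous_on (closure \<Omega>) f"
  shows "integrable (lebesgue_on \<Omega>) f"
proof -
  have "finite_measure (lebesgue_on \<Omega>)"
    using assms by (intro finite_measure_lebesgue_on lmeasurable_open)
  moreover have "compact (f ` closure \<Omega>)"
    using assms by (intro compact_continuous_image) (auto simp: compact_closure)
  then obtain B where "\<forall>y\<in>f ` closure \<Omega>. norm y \<le> B"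
    using compact_imp_bounded bounded_iff by metis
  then have "AE x in lebesgue_on \<Omega>. norm (f x) \<le> B"
    using closure_subset by (intro AE_I2) (auto simp: space_lebesgue_on)
  ultimately show ?thesis
    using finite_measure.integrable_const_bound measurable_continuous_on_closure[OF assms(1,3)]
    by blast
qed

lemma nonpos_of_AE_nonpos_continuous:
  fixes g :: "'a::euclidean_space \<Rightarrow> real"
  assumes \<Omega>: "open \<Omega>" and g: "continuous_on (closure \<Omega>) g"
    and AE: "AE x in lebesgue_on \<Omega>. g x \<le> 0" and \<omega>: "\<omega> \<in> closure \<Omega>"
  shows "g \<omega> \<le> 0"
proof (rule ccontr)
  assume "\<not> g \<omega> \<le> 0"
  then have "0 < g \<omega>"
    by simp
  then obtain d where d: "0 < d" "\<forall>x\<in>closure \<Omega>. dist x \<omega> < d \<longrightarrow> dist (g x) (g \<omega>) < g \<omega>"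
    using g \<omega> unfolding continuous_on_iff by blast
  define W where "W = \<Omega> \<inter> ball \<omega> d"
  have W: "open W" "W \<in> sets (lebesgue_on \<Omega>)"
    using \<Omega> by (simp_all add: W_def open_Int sets_restrict_space_iff sets_lebesgue_open)
  obtain w where "w \<in> \<Omega>" "dist w \<omega> < d"
    using \<omega> d(1) closure_approachable by blast
  then have "w \<in> W"
    by (simp add: W_def dist_commute)
  have pos: "0 < g x" if "x \<in> W" for x
  proof -
    have "x \<in> closure \<Omega>" "dist x \<omega> < d"
      using that closure_subset by (auto simp: W_def dist_commute)
    then show ?thesis
      using d(2) by (auto simp: dist_real_def)
  qed
  have outside: "x \<notin> W" if "g x \<le> 0" for x
    using pos[of x] that by (cases "x \<in> W") auto
  have "AE x in lebesgue_on \<Omega>. x \<notin> W"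
    using AE by (rule AE_mp) (intro AE_I2 impI outside)
  moreover have "{x \<in> space (lebesgue_on \<Omega>). \<not> x \<notin> W} = W"
    by (auto simp: W_def space_lebesgue_on)
  ultimately have "emeasure (lebesgue_on \<Omega>) W = 0"
    using AE_iff_measurable[OF W(2), where P = "\<lambda>x. x \<notin> W"] by simp
  moreover have "emeasure (lebesgue_on \<Omega>) W = emeasure lebesgue W"
    using \<Omega> by (intro emeasure_restrict_space) (auto simp: W_def sets_lebesgue_open)
  ultimately show False
    using emeasure_lebesgue_open_pos[OF W(1) \<open>w \<in> W\<close>] by simp
qed

lemma Lp_norm_ereal_eq_integral:
  fixes f :: "'a::euclidean_space \<Rightarrow> real"
  assumes "open \<Omega>" "continuous_on (closure \<Omega>) f" "0 < P"
  shows "Lp_norm (ereal P) \<Omega> f = (\<integral>x. \<bar>f x\<bar> powr P \<partial>lebesgue_on \<Omega>) powr (1 / P)"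
proof -
  have "continuous_on (closure \<Omega>) (\<lambda>x. \<bar>f x\<bar> powr P)"
    using assms by (intro continuous_on_powr' continuous_intros) auto
  then have "enn2real (\<integral>\<^sup>+ x. ennreal (\<bar>f x\<bar> powr P) \<partial>lebesgue_on \<Omega>) = (\<integral>x. \<bar>f x\<bar> powr P \<partial>lebesgue_on \<Omega>)"
    by (intro enn2real_nn_integral_eq_integral measurable_continuous_on_closure assms) auto
  moreover have "(\<integral>\<^sup>+ x\<in>\<Omega>. ennreal (\<bar>f x\<bar> powr P) \<partial>lebesgue) = (\<integral>\<^sup>+ x. ennreal (\<bar>f x\<bar> powr P) \<partial>lebesgue_on \<Omega>)"
    using assms(1) by (intro nn_integral_restrict_space[symmetric]) (simp add: sets_lebesgue_open)
  ultimately show ?thesis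
    by (simp add: Lp_norm_def)
qed

text \<open>\<open>Lp_norm\<close> \<open>\<infinity>\<close> is \<open>real_of_ereal\<close> of an essential supremum, hence a junk
  value unless that supremum is finite and the space is not null; both hold here.\<close>

lemma
  fixes f :: "'a::euclidean_space \<Rightarrow> real"
  assumes \<Omega>: "open \<Omega>" "bounded \<Omega>" "\<Omega> \<noteq> {}" and f: "continuous_on (closure \<Omega>) f"
  shows Lp_norm_infinity_nonneg: "0 \<le> Lp_norm \<infinity> \<Omega> f"
    and AE_le_Lp_norm_infinity: "AE x in lebesgue_on \<Omega>. \<bar>f x\<bar> \<le> Lp_norm \<infinity> \<Omega> f"
    and Lp_norm_infinity_le: "AE x in lebesgue_on \<Omega>. \<bar>f x\<bar> \<le> r \<Longrightarrow> Lp_norm \<infinity> \<Omega> f \<le> r"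
proof -
  define e where "e = esssup (lebesgue_on \<Omega>) (\<lambda>x. ereal \<bar>f x\<bar>)"
  have meas: "(\<lambda>x. ereal \<bar>f x\<bar>) \<in> borel_measurable (lebesgue_on \<Omega>)"
    using measurable_continuous_on_closure[OF \<Omega>(1) f] by measurable
  obtain w where "w \<in> \<Omega>"
    using \<Omega>(3) by blast
  then have "0 < emeasure lebesgue \<Omega>"
    by (rule emeasure_lebesgue_open_pos[OF \<Omega>(1)])
  then have "emeasure (lebesgue_on \<Omega>) (space (lebesgue_on \<Omega>)) \<noteq> 0"
    using \<Omega>(1) by (simp add: space_lebesgue_on emeasure_restrict_space sets_lebesgue_open)
  then have e0: "0 \<le> e"
    using esssup_mono[of "\<lambda>x. 0" "lebesgue_on \<Omega>" "\<lambda>x. ereal \<bar>f x\<bar>"]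
    by (simp add: e_def esssup_const)
  have "compact (f ` closure \<Omega>)"
    using \<Omega> f by (intro compact_continuous_image) (auto simp: compact_closure)
  then obtain B where "\<forall>y\<in>f ` closure \<Omega>. norm y \<le> B"
    using compact_imp_bounded bounded_iff by metis
  then have "AE x in lebesgue_on \<Omega>. ereal \<bar>f x\<bar> \<le> ereal B"
    using closure_subset by (intro AE_I2) (auto simp: space_lebesgue_on)
  then have "e \<le> ereal B"
    unfolding e_def using meas by (intro esssup_I)
  with e0 have e: "e = ereal (Lp_norm \<infinity> \<Omega> f)"
    by (cases e) (auto simp: Lp_norm_def e_def)
  show "0 \<le> Lp_norm \<infinity> \<Omega> f"
    using e0 e by simp
  show "AE x in lebesgue_on \<Omega>. \<bar>f x\<bar> \<le> Lp_norm \<infinity> \<Omega> f"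
    using esssup_AE[of "\<lambda>x. ereal \<bar>f x\<bar>" "lebesgue_on \<Omega>"] e by (simp add: e_def)
  assume "AE x in lebesgue_on \<Omega>. \<bar>f x\<bar> \<le> r"
  then have "e \<le> ereal r"
    unfolding e_def using meas by (intro esssup_I) auto
  then show "Lp_norm \<infinity> \<Omega> f \<le> r"
    using e by simp
qed

lemma Lp_norm_pos:
  fixes f :: "'a::euclidean_space \<Rightarrow> real"
  assumes "1 \<le> p" and \<Omega>: "open \<Omega>" "bounded \<Omega>" and f: "continuous_on (closure \<Omega>) f"
    and \<omega>: "\<omega> \<in> closure \<Omega>" "f \<omega> \<noteq> 0"
  shows "0 < Lp_norm p \<Omega> f"
  using assms(1)
proof (cases rule: ereal_ge_1_cases)
  case 1
  have "\<Omega> \<noteq> {}"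
    using \<omega>(1) by auto
  have "continuous_on (closure \<Omega>) (\<lambda>x. \<bar>f x\<bar>)"
    by (intro continuous_intros f)
  then have "\<not> (AE x in lebesgue_on \<Omega>. \<bar>f x\<bar> \<le> 0)"
    using nonpos_of_AE_nonpos_continuous[OF \<Omega>(1) _ _ \<omega>(1)] \<omega>(2) by fastforce
  then have "Lp_norm \<infinity> \<Omega> f \<noteq> 0"
    using AE_le_Lp_norm_infinity[OF \<Omega> \<open>\<Omega> \<noteq> {}\<close> f] by auto
  then show ?thesis
    using Lp_norm_infinity_nonneg[OF \<Omega> \<open>\<Omega> \<noteq> {}\<close> f] 1 by simp
next
  case (2 P)
  have cont: "continuous_on (closure \<Omega>) (\<lambda>x. \<bar>f x\<bar> powr P)"
    using f 2 by (intro continuous_on_powr' continuous_intros) auto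
  have "\<not> (AE x in lebesgue_on \<Omega>. \<bar>f x\<bar> powr P \<le> 0)"
    using nonpos_of_AE_nonpos_continuous[OF \<Omega>(1) cont _ \<omega>(1)] \<omega>(2) by auto
  then have "(\<integral>x. \<bar>f x\<bar> powr P \<partial>lebesgue_on \<Omega>) \<noteq> 0"
    using integral_nonneg_eq_0_iff_AE[OF integrable_continuous_on_closure[OF \<Omega> cont]]
    by (auto elim: AE_mp)
  moreover have "0 \<le> (\<integral>x. \<bar>f x\<bar> powr P \<partial>lebesgue_on \<Omega>)"
    by (rule integral_nonneg_AE) auto
  ultimately show ?thesis
    using Lp_norm_ereal_eq_integral[OF \<Omega>(1) f] 2 by simp
qed

section \<open>The norm of \<open>X\<close>\<close>

context
  fixes p :: ereal and Q :: "real^'n^'n"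
  assumes p: "1 \<le> p" and diag: "\<forall>i j. i \<noteq> j \<longrightarrow> Q $ i $ j = 0" and qpos: "\<forall>i. 0 < Q $ i $ i"
begin

lemma diag_component_le_pnorm: "Q $ i $ i * \<bar>z $ i\<bar> \<le> pnorm p (Q *v z)"
  using abs_component_le_pnorm[OF p, of "Q *v z" i] qpos
  by (simp add: diag_matrix_vector_mult_nth[OF diag] abs_mult less_imp_le)

lemma pnorm_diag_pos:
  assumes "z \<noteq> 0"
  shows "0 < pnorm p (Q *v z)"
proof -
  obtain i where "z $ i \<noteq> 0"
    using assms by (auto simp: vec_eq_iff)
  then have "0 < Q $ i $ i * \<bar>z $ i\<bar>"
    using qpos by simp
  then show ?thesis
    using diag_component_le_pnorm[of i z] by linarith
qed

lemma norm_le_pnorm_diag: "norm z \<le> (\<Sum>i\<in>UNIV. 1 / Q $ i $ i) * pnorm p (Q *v z)"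
proof -
  have "norm z \<le> (\<Sum>i\<in>UNIV. \<bar>z $ i\<bar>)"
    by (rule norm_le_l1_cart)
  also have "\<dots> \<le> (\<Sum>i\<in>UNIV. 1 / Q $ i $ i * pnorm p (Q *v z))"
    using diag_component_le_pnorm qpos by (intro sum_mono) (simp add: field_simps mult.commute)
  finally show ?thesis
    by (simp add: sum_distrib_right)
qed

lemma pnorm_diag_powr:
  assumes "p = ereal P"
  shows "pnorm p (Q *v z) powr P = (\<Sum>i\<in>UNIV. Q $ i $ i powr P * \<bar>z $ i\<bar> powr P)"
  using p qpos unfolding assms
  by (simp add: pnorm_ereal_powr diag_matrix_vector_mult_nth[OF diag] abs_mult powr_mult less_imp_le)

context
  fixes \<Omega> :: "'m::euclidean_space set"
  assumes \<Omega>: "open \<Omega>" "bounded \<Omega>" "\<Omega> \<noteq> {}"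
begin

lemma continuous_on_pnorm_diag_powr:
  assumes "continuous_on (closure \<Omega>) c" "1 \<le> P"
  shows "continuous_on (closure \<Omega>) (\<lambda>\<omega>. pnorm p (Q *v c \<omega>) powr P)"
proof -
  have "continuous_on (closure \<Omega>) (\<lambda>\<omega>. pnorm p (Q *v c \<omega>))"
    using continuous_on_compose2[OF continuous_on_pnorm_matrix[OF p, of UNIV Q] assms(1)] by simp
  then show ?thesis
    using assms(2) by (intro continuous_on_powr' continuous_on_const) (auto simp: pnorm_nonneg)
qed

lemma Xnorm_ereal_eq_integral:
  assumes P: "p = ereal P" and c: "continuous_on (closure \<Omega>) c"
  shows "Xnorm p Q \<Omega> c = (\<integral>\<omega>. pnorm p (Q *v c \<omega>) powr P \<partial>lebesgue_on \<Omega>) powr (1 / P)"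
proof -
  have P1: "1 \<le> P"
    using p P by simp
  define I where "I i = (\<integral>\<omega>. \<bar>c \<omega> $ i\<bar> powr P \<partial>lebesgue_on \<Omega>)" for i
  have ci: "continuous_on (closure \<Omega>) (\<lambda>\<omega>. c \<omega> $ i)" for i
    by (intro continuous_intros c)
  have "continuous_on (closure \<Omega>) (\<lambda>\<omega>. \<bar>c \<omega> $ i\<bar> powr P)" for i
    using P1 by (intro continuous_on_powr' continuous_intros c) auto
  then have int: "integrable (lebesgue_on \<Omega>) (\<lambda>\<omega>. \<bar>c \<omega> $ i\<bar> powr P)" for i
    by (rule integrable_continuous_on_closure[OF \<Omega>(1,2)])
  have I: "0 \<le> I i" for i
    unfolding I_def by (rule integral_nonneg_AE) auto
  have "Xnorm p Q \<Omega> c = (\<Sum>i\<in>UNIV. \<bar>Q $ i $ i * I i powr (1 / P)\<bar> powr P) powr (1 / P)"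
    using Lp_norm_ereal_eq_integral[OF \<Omega>(1) ci] P1 by (simp add: Xnorm_def pnorm_ereal P I_def)
  also have "(\<Sum>i\<in>UNIV. \<bar>Q $ i $ i * I i powr (1 / P)\<bar> powr P) = (\<Sum>i\<in>UNIV. Q $ i $ i powr P * I i)"
    using qpos I P1 by (intro sum.cong) (simp_all add: abs_mult powr_mult powr_powr less_imp_le)
  also have "\<dots> = (\<integral>\<omega>. (\<Sum>i\<in>UNIV. Q $ i $ i powr P * \<bar>c \<omega> $ i\<bar> powr P) \<partial>lebesgue_on \<Omega>)"
    using int by (simp add: I_def)
  also have "\<dots> = (\<integral>\<omega>. pnorm p (Q *v c \<omega>) powr P \<partial>lebesgue_on \<Omega>)"
    by (simp add: pnorm_diag_powr[OF P])
  finally show ?thesis .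
qed

lemma Xnorm_infinity_le:
  assumes "p = \<infinity>" and c: "continuous_on (closure \<Omega>) c"
    and bound: "AE \<omega> in lebesgue_on \<Omega>. pnorm p (Q *v c \<omega>) \<le> r"
  shows "Xnorm p Q \<Omega> c \<le> r"
  unfolding Xnorm_def \<open>p = \<infinity>\<close>
proof (rule pnorm_infinity_le)
  fix i
  have qi: "0 < Q $ i $ i"
    using qpos by simp
  have ci: "continuous_on (closure \<Omega>) (\<lambda>\<omega>. c \<omega> $ i)"
    by (intro continuous_intros c)
  have "AE \<omega> in lebesgue_on \<Omega>. \<bar>c \<omega> $ i\<bar> \<le> r / Q $ i $ i"
    using bound
  proof eventually_elim
    case (elim \<omega>)
    then have "\<bar>c \<omega> $ i\<bar> * Q $ i $ i \<le> r"
      using diag_component_le_pnorm[of i "c \<omega>"] by (simp add: mult.commute[of "\<bar>c \<omega> $ i\<bar>"])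
    then show ?case
      using qi by (simp add: pos_le_divide_eq)
  qed
  then have "Lp_norm \<infinity> \<Omega> (\<lambda>\<omega>. c \<omega> $ i) \<le> r / Q $ i $ i"
    by (rule Lp_norm_infinity_le[OF \<Omega> ci])
  then have "Q $ i $ i * Lp_norm \<infinity> \<Omega> (\<lambda>\<omega>. c \<omega> $ i) \<le> r"
    using qi by (simp add: pos_le_divide_eq mult.commute[of "Q $ i $ i"])
  then show "\<bar>(\<chi> i. Q $ i $ i * Lp_norm \<infinity> \<Omega> (\<lambda>\<omega>. c \<omega> $ i)) $ i\<bar> \<le> r"
    using qi Lp_norm_infinity_nonneg[OF \<Omega> ci] by simp
qed

lemma AE_pnorm_le_Xnorm_infinity:
  assumes "p = \<infinity>" and c: "continuous_on (closure \<Omega>) c"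
  shows "AE \<omega> in lebesgue_on \<Omega>. pnorm p (Q *v c \<omega>) \<le> Xnorm p Q \<Omega> c"
proof -
  have ci: "continuous_on (closure \<Omega>) (\<lambda>\<omega>. c \<omega> $ i)" for i
    by (intro continuous_intros c)
  have "AE \<omega> in lebesgue_on \<Omega>. \<forall>i. \<bar>c \<omega> $ i\<bar> \<le> Lp_norm \<infinity> \<Omega> (\<lambda>\<omega>. c \<omega> $ i)"
    by (intro eventually_all_finite AE_le_Lp_norm_infinity[OF \<Omega> ci])
  then show ?thesis
  proof eventually_elim
    case (elim \<omega>)
    have "\<bar>(Q *v c \<omega>) $ i\<bar> \<le> Xnorm p Q \<Omega> c" for i
    proof -
      have "0 < Q $ i $ i"
        using qpos by simp
      then have "\<bar>(Q *v c \<omega>) $ i\<bar> \<le> Q $ i $ i * Lp_norm \<infinity> \<Omega> (\<lambda>\<omega>. c \<omega> $ i)"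
        using elim by (simp add: diag_matrix_vector_mult_nth[OF diag] abs_mult)
      also have "\<dots> \<le> \<bar>Q $ i $ i * Lp_norm \<infinity> \<Omega> (\<lambda>\<omega>. c \<omega> $ i)\<bar>"
        by (rule abs_ge_self)
      also have "\<dots> \<le> Xnorm p Q \<Omega> c"
        using abs_component_le_pnorm[OF p, of "\<chi> i. Q $ i $ i * Lp_norm p \<Omega> (\<lambda>\<omega>. c \<omega> $ i)" i]
          \<open>p = \<infinity>\<close>
        by (simp add: Xnorm_def)
      finally show ?thesis .
    qed
    then show ?case
      unfolding \<open>p = \<infinity>\<close> by (rule pnorm_infinity_le)
  qed
qed

lemma Xnorm_triangle:
  assumes c: "continuous_on (closure \<Omega>) c" and d: "continuous_on (closure \<Omega>) d"
  shows "Xnorm p Q \<Omega> (\<lambda>\<omega>. c \<omega> + d \<omega>) \<le> Xnorm p Q \<Omega> c + Xnorm p Q \<Omega> d"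
  using p
proof (cases rule: ereal_ge_1_cases)
  case 1
  show ?thesis
  proof (rule Xnorm_infinity_le[OF 1])
    show "AE \<omega> in lebesgue_on \<Omega>. pnorm p (Q *v (c \<omega> + d \<omega>)) \<le> Xnorm p Q \<Omega> c + Xnorm p Q \<Omega> d"
      using AE_pnorm_le_Xnorm_infinity[OF 1 c] AE_pnorm_le_Xnorm_infinity[OF 1 d]
    proof eventually_elim
      case (elim \<omega>)
      then show ?case
        using pnorm_triangle[OF p, of "Q *v c \<omega>" "Q *v d \<omega>"] by (simp add: matrix_vector_right_distrib)
    qed
  qed (intro continuous_intros c d)
next
  case (2 P)
  have cd: "continuous_on (closure \<Omega>) (\<lambda>\<omega>. c \<omega> + d \<omega>)"
    by (intro continuous_intros c d)
  have int: "integrable (lebesgue_on \<Omega>) (\<lambda>\<omega>. pnorm p (Q *v e \<omega>) powr P)"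
    if "continuous_on (closure \<Omega>) e" for e
    using that 2 by (intro integrable_continuous_on_closure[OF \<Omega>(1,2)] continuous_on_pnorm_diag_powr)
  show ?thesis
    unfolding Xnorm_ereal_eq_integral[OF 2(1) c] Xnorm_ereal_eq_integral[OF 2(1) d]
      Xnorm_ereal_eq_integral[OF 2(1) cd]
    using pnorm_triangle[OF p] 2 c d cd
    by (intro integral_powr_root_triangle int)
      (auto simp: pnorm_nonneg matrix_vector_right_distrib)
qed

lemma Xnorm_dominated:
  assumes c: "continuous_on (closure \<Omega>) c" and a: "continuous_on (closure \<Omega>) a" and k: "0 \<le> k"
    and dom: "\<And>\<omega>. \<omega> \<in> closure \<Omega> \<Longrightarrow> pnorm p (Q *v c \<omega>) \<le> k * pnorm p (Q *v a \<omega>)"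
  shows "Xnorm p Q \<Omega> c \<le> k * Xnorm p Q \<Omega> a"
  using p
proof (cases rule: ereal_ge_1_cases)
  case 1
  show ?thesis
  proof (rule Xnorm_infinity_le[OF 1 c])
    show "AE \<omega> in lebesgue_on \<Omega>. pnorm p (Q *v c \<omega>) \<le> k * Xnorm p Q \<Omega> a"
      using AE_pnorm_le_Xnorm_infinity[OF 1 a] AE_space
    proof eventually_elim
      case (elim \<omega>)
      then have "\<omega> \<in> closure \<Omega>"
        using closure_subset by (auto simp: space_lebesgue_on)
      then show ?case
        using dom elim k by (meson mult_left_mono order_trans)
    qed
  qed
next
  case (2 P)
  have int: "integrable (lebesgue_on \<Omega>) (\<lambda>\<omega>. pnorm p (Q *v e \<omega>) powr P)"
    if "continuous_on (closure \<Omega>) e" for e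
    using that 2 by (intro integrable_continuous_on_closure[OF \<Omega>(1,2)] continuous_on_pnorm_diag_powr)
  have "(\<integral>\<omega>. pnorm p (Q *v c \<omega>) powr P \<partial>lebesgue_on \<Omega>)
      \<le> (\<integral>\<omega>. k powr P * pnorm p (Q *v a \<omega>) powr P \<partial>lebesgue_on \<Omega>)"
  proof (rule integral_mono)
    fix \<omega>
    assume "\<omega> \<in> space (lebesgue_on \<Omega>)"
    then have "\<omega> \<in> closure \<Omega>"
      using closure_subset by (auto simp: space_lebesgue_on)
    then show "pnorm p (Q *v c \<omega>) powr P \<le> k powr P * pnorm p (Q *v a \<omega>) powr P"
      using dom 2 k by (simp add: powr_mono2 pnorm_nonneg flip: powr_mult)
  qed (use int[OF c] int[OF a] in auto)
  then have "(\<integral>\<omega>. pnorm p (Q *v c \<omega>) powr P \<partial>lebesgue_on \<Omega>) powr (1 / P)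
      \<le> (k powr P * (\<integral>\<omega>. pnorm p (Q *v a \<omega>) powr P \<partial>lebesgue_on \<Omega>)) powr (1 / P)"
    using 2 by (intro powr_mono2) (auto intro: integral_nonneg_AE)
  also have "\<dots> = k * (\<integral>\<omega>. pnorm p (Q *v a \<omega>) powr P \<partial>lebesgue_on \<Omega>) powr (1 / P)"
    using 2 k by (simp add: powr_mult powr_powr integral_nonneg_AE)
  finally show ?thesis
    by (simp add: Xnorm_ereal_eq_integral[OF 2(1) c] Xnorm_ereal_eq_integral[OF 2(1) a])
qed

lemma Xnorm_pos:
  assumes a: "continuous_on (closure \<Omega>) a" and \<omega>: "\<omega> \<in> closure \<Omega>" "a \<omega> \<noteq> 0"
  shows "0 < Xnorm p Q \<Omega> a"
proof -
  obtain i where i: "a \<omega> $ i \<noteq> 0"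
    using \<omega>(2) by (auto simp: vec_eq_iff)
  have "continuous_on (closure \<Omega>) (\<lambda>\<omega>. a \<omega> $ i)"
    by (intro continuous_intros a)
  then have "0 < Q $ i $ i * Lp_norm p \<Omega> (\<lambda>\<omega>. a \<omega> $ i)"
    using Lp_norm_pos[OF p \<Omega>(1,2) _ \<omega>(1)] i qpos by simp
  also have "\<dots> \<le> Xnorm p Q \<Omega> a"
    using abs_component_le_pnorm[OF p, of "\<chi> i. Q $ i $ i * Lp_norm p \<Omega> (\<lambda>\<omega>. a \<omega> $ i)" i]
    unfolding Xnorm_def by (simp add: abs_le_iff)
  finally show ?thesis .
qed

lemma lifted_norm_Xnorm: "lifted_norm (\<lambda>z. pnorm p (Q *v z)) (Xnorm p Q \<Omega>) (closure \<Omega>)"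
proof
  show "pnorm p (Q *v (x + y)) \<le> pnorm p (Q *v x) + pnorm p (Q *v y)" for x y
    by (simp add: matrix_vector_right_distrib pnorm_triangle[OF p])
  show "pnorm p (Q *v (r *\<^sub>R x)) = \<bar>r\<bar> * pnorm p (Q *v x)" for r x
    by (simp add: matrix_vector_mult_scaleR pnorm_scaleR[OF p])
  show "\<exists>C. \<forall>x. norm x \<le> C * pnorm p (Q *v x)"
    using norm_le_pnorm_diag by blast
qed (fact pnorm_diag_pos pnorm_matrix_le_norm[OF p] Xnorm_triangle Xnorm_dominated Xnorm_pos)+

end

end

lemma Yspace_continuous:
  assumes "u \<in> Yspace \<Omega> V"
  shows "continuous_on (closure \<Omega>) u"
proof -
  have "continuous_on (closure \<Omega>) (\<lambda>x. u x $ i)" for i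
  proof -
    obtain U G where UG: "open U" "closure \<Omega> \<subseteq> U" "Ck_on 2 U G" "\<forall>x\<in>closure \<Omega>. G x = u x $ i"
      using assms unfolding Yspace_def by blast
    have "\<forall>x\<in>U. G differentiable (at x)"
      using UG(3) by (simp add: numeral_2_eq_2)
    then have "continuous_on U G"
      by (intro continuous_at_imp_continuous_on) (auto intro: differentiable_imp_continuous_within)
    then have "continuous_on (closure \<Omega>) G"
      using UG(2) by (rule continuous_on_subset)
    then show ?thesis
      by (rule continuous_on_eq) (use UG(4) in simp)
  qed
  then have "continuous_on (closure \<Omega>) (\<lambda>x. \<chi> i. u x $ i)"
    by (rule continuous_on_vec_lambda)
  then show ?thesis
    by simp
qed

theorem lemma7:
  fixes \<Omega> :: "'m::euclidean_space set"
    and V :: "(real^'n) set"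
    and F :: "real^'n \<Rightarrow> real^'n"
    and p :: ereal
    and Q :: "real^'n^'n"
  assumes "bounded_smooth_domain \<Omega>"
    and "1 \<le> p"
    and "\<forall>i j. i \<noteq> j \<longrightarrow> Q $ i $ j = 0"
    and "\<forall>i. Q $ i $ i > 0"
  shows "M_plus_YX p Q \<Omega> V (\<lambda>w \<omega>. F (w \<omega>)) \<le> M_pQ p Q V F"
proof -
  have "open \<Omega>" "bounded \<Omega>" "\<Omega> \<noteq> {}"
    using assms(1) by (auto simp: bounded_smooth_domain_def)
  then interpret lifted_norm "\<lambda>z. pnorm p (Q *v z)" "Xnorm p Q \<Omega>" "closure \<Omega>"
    using lifted_norm_Xnorm assms(2-4) by blast
  have "\<And>u. u \<in> Yspace \<Omega> V \<Longrightarrow> continuous_on (closure \<Omega>) u \<and> u ` closure \<Omega> \<subseteq> V"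
    using Yspace_continuous by (auto simp: Yspace_def)
  then show ?thesis
    using SUP_Lim_lifted_slope_le[of "Yspace \<Omega> V" V F]
    by (simp add: M_plus_YX_def M_pQ_def rel_diff_quot_def[abs_def] sup_slope_def[abs_def])
qed

end
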